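(* Let $\{X_n,n\geq1\}$ be a $\varphi$-mixing sequence of random variables with common marginal distribution function $F$, whose mixing coefficients satisfy $\sum_{n=1}^\infty\varphi^{1/2}(n)<\infty$. Fix $p\in(0,1)$ and let $\xi_p=\inf\{x:F(x)\geq p\}$. Assume that $F$ possesses a positive continuous density $f$ in a neighborhood $\mathscr{N}_p$ of $\xi_p$ such that $0<d=\sup\{f(x):x\in\mathscr{N}_p\}<\infty$. Let $C_3=4\big[1+4\sum_{n=1}^\infty\varphi^{1/2}(n)\big]$. For any $\theta>0$ put $$\tau_n=\frac{\sqrt{16C_3+\theta}\,(\log n)^{3/2}}{n^{1/2}(\log\log n)^{1/2}},\qquad \mathscr{E}_n=[\xi_p-\tau_n,\xi_p+\tau_n].$$ Then with probability 1, $$\sup_{x\in\mathscr{E}_n}|F_n(x)-F(x)|\leq(1+d)\left(\frac{(16C_3+\theta)\log n}{4n}\right)^{1/2}\quad\text{for all } n\text{ sufficiently large}.$$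
   Context: All random variables are defined on a probability space $(\Omega,\mathcal{F},P)$. $F_n(x)=\frac1n\sum_{i=1}^n I(X_i\leq x)$ is the empirical distribution function of $X_1,\dots,X_n$. For $n\leq m$ let $\mathcal{F}_n^m=\sigma(X_i,n\leq i\leq m)$. For sub-$\sigma$-algebras $\mathcal{B},\mathcal{R}$ let $\varphi(\mathcal{B},\mathcal{R})=\sup_{A\in\mathcal{B},B\in\mathcal{R},P(A)>0}|P(B\mid A)-P(B)|$, and the mixing coefficients are $\varphi(n)=\sup_{k\geq1}\varphi(\mathcal{F}_1^k,\mathcal{F}_{k+n}^\infty)$. The sequence is called $\varphi$-mixing if $\varphi(n)\downarrow0$ as $n\to\infty$. *)

theory Defs
  imports "HOL-Probability.Probability"
begin

definition gen_sigma :: "'a measure \<Rightarrow> (nat \<Rightarrow> 'a \<Rightarrow> real) \<Rightarrow> nat set \<Rightarrow> 'a set set" where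
  "gen_sigma M X I = sigma_sets (space M)
     {X i -` A \<inter> space M | i A. i \<in> I \<and> A \<in> sets borel}"

definition phi_sets :: "'a measure \<Rightarrow> 'a set set \<Rightarrow> 'a set set \<Rightarrow> real" where
  "phi_sets M \<B> \<R> = Sup {\<bar>measure M (A \<inter> B) / measure M A - measure M B\<bar> | A B.
      A \<in> \<B> \<and> B \<in> \<R> \<and> measure M A > 0}"

definition phi_mix :: "'a measure \<Rightarrow> (nat \<Rightarrow> 'a \<Rightarrow> real) \<Rightarrow> nat \<Rightarrow> real" where
  "phi_mix M X n = (SUP k\<in>{1..}. phi_sets M (gen_sigma M X {1..k}) (gen_sigma M X {k+n..}))"

definition emp_df :: "(nat \<Rightarrow> 'a \<Rightarrow> real) \<Rightarrow> nat \<Rightarrow> 'a \<Rightarrow> real \<Rightarrow> real" where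
  "emp_df X n \<omega> x = card {i \<in> {1..n}. X i \<omega> \<le> x} / real n"

end

theory Submission
  imports Defs "HOL-Real_Asymp.Real_Asymp"
begin

(* Fix a point y and split the centred count S_n(y) = sum_{i<=n} (1{X_i <= y} - F y) into
   alternate blocks of length L ~ n^(1/3). Blocks of equal parity are a full block apart, so the
   phi-mixing inequality E[U V] <= E U (E V + phi(L) sup V) lets the moment generating function of
   one parity class factor block by block, at the price phi(L) per block; the mgf of a single block
   is bounded through its variance, at most L (1 + 2 sum_k phi k). With S = sum_n sqrt (phi n) < oo,
   monotonicity gives phi(L) <= S^2 / L^2, and a Chernoff bound yields
   P(|S_n(y)| > n s_n) <= C n^(-4/3) for s_n = sqrt (c log n / (4 n)).
   The window [xi_p - tau_n, xi_p + tau_n] is covered by a grid of mesh s_n with O(n^(1/6)) points,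
   so Borel-Cantelli gives the bound at all grid points eventually, almost surely; between grid
   points, monotonicity of F_n and F and the density bound d cost at most d s_n. *)

text \<open>The measurable space \<open>(space M, gen_sigma M X I)\<close>, so that measurability with respect to
  \<open>\<sigma>(X\<^sub>i, i \<in> I)\<close> can be stated with \<open>borel_measurable\<close>.\<close>

definition gen_measure :: "'a measure \<Rightarrow> (nat \<Rightarrow> 'a \<Rightarrow> real) \<Rightarrow> nat set \<Rightarrow> 'a measure" where
  "gen_measure M X I = sigma (space M) {X i -` A \<inter> space M | i A. i \<in> I \<and> A \<in> sets borel}"

lemma sets_gen_measure: "sets (gen_measure M X I) = gen_sigma M X I"
  unfolding gen_measure_def gen_sigma_def by (rule sets_measure_of) auto

lemma space_gen_measure: "space (gen_measure M X I) = space M"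
  unfolding gen_measure_def by (rule space_measure_of) auto

lemma X_measurable_gen_measure: "i \<in> I \<Longrightarrow> X i \<in> borel_measurable (gen_measure M X I)"
proof (rule measurableI)
  fix A :: "real set" assume "i \<in> I" "A \<in> sets borel"
  then show "X i -` A \<inter> space (gen_measure M X I) \<in> sets (gen_measure M X I)"
    unfolding space_gen_measure sets_gen_measure gen_sigma_def by (intro sigma_sets.Basic) blast
qed auto

context prob_space
begin

lemma abs_cond_prob_diff_le_1:
  assumes "A \<in> events" "B \<in> events" "prob A > 0"
  shows "\<bar>prob (A \<inter> B) / prob A - prob B\<bar> \<le> 1"
proof -
  have "prob (A \<inter> B) \<le> prob A" by (intro finite_measure_mono) (use assms in auto)
  then have "prob (A \<inter> B) / prob A \<le> 1" using assms by auto
  moreover have "0 \<le> prob (A \<inter> B) / prob A" "prob B \<le> 1" by simp_all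
  ultimately show ?thesis unfolding abs_le_iff using measure_nonneg[of M B] by linarith
qed

lemma bdd_above_cond_prob_diffs:
  assumes "\<B> \<subseteq> events" "\<R> \<subseteq> events"
  shows "bdd_above {\<bar>prob (A \<inter> B) / prob A - prob B\<bar> | A B. A \<in> \<B> \<and> B \<in> \<R> \<and> prob A > 0}"
  by (rule bdd_aboveI[of _ 1]) (use abs_cond_prob_diff_le_1 assms in blast)

lemma phi_sets_bounds:
  assumes "\<B> \<subseteq> events" "\<R> \<subseteq> events" "space M \<in> \<B>" "space M \<in> \<R>"
  shows "0 \<le> phi_sets M \<B> \<R>" "phi_sets M \<B> \<R> \<le> 1"
proof -
  have zero: "0 \<in> {\<bar>prob (A \<inter> B) / prob A - prob B\<bar> | A B. A \<in> \<B> \<and> B \<in> \<R> \<and> prob A > 0}"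
    using assms(3,4) by (force simp: prob_space)
  show "0 \<le> phi_sets M \<B> \<R>"
    unfolding phi_sets_def by (rule cSup_upper[OF zero bdd_above_cond_prob_diffs[OF assms(1,2)]])
  show "phi_sets M \<B> \<R> \<le> 1"
    unfolding phi_sets_def by (rule cSup_least) (use zero abs_cond_prob_diff_le_1 assms(1,2) in blast)+
qed

lemma measure_Int_le_phi_sets:
  assumes "\<B> \<subseteq> events" "\<R> \<subseteq> events" "A \<in> \<B>" "B \<in> \<R>"
  shows "prob (A \<inter> B) \<le> prob A * (prob B + phi_sets M \<B> \<R>)"
proof (cases "prob A > 0")
  case False
  then have "prob A = 0" using measure_nonneg[of M A] by linarith
  moreover have "prob (A \<inter> B) \<le> prob A" using assms by (intro finite_measure_mono) auto
  ultimately show ?thesis by simp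
next
  case True
  have "\<bar>prob (A \<inter> B) / prob A - prob B\<bar> \<le> phi_sets M \<B> \<R>"
    unfolding phi_sets_def
    by (rule cSup_upper[OF _ bdd_above_cond_prob_diffs[OF assms(1,2)]]) (use assms True in blast)
  then have "prob (A \<inter> B) / prob A \<le> prob B + phi_sets M \<B> \<R>" by linarith
  then show ?thesis using True by (simp add: divide_le_eq mult.commute)
qed

lemma integral_indicator_mult_finite_range:
  fixes f :: "'a \<Rightarrow> real"
  assumes f[measurable]: "f \<in> borel_measurable M" and fin: "finite (f ` space M)"
    and C[measurable]: "C \<in> events"
  shows "integral\<^sup>L M (\<lambda>x. indicator C x * f x) = (\<Sum>v\<in>f ` space M. v * prob (C \<inter> {x\<in>space M. f x = v}))"
proof -
  have [measurable]: "C \<inter> {x\<in>space M. f x = v} \<in> events" for v by measurable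
  have "indicator C x * f x = (\<Sum>v\<in>f ` space M. v * indicator (C \<inter> {x\<in>space M. f x = v}) x)"
    if "x \<in> space M" for x
  proof -
    have "(\<Sum>v\<in>f ` space M. v * indicator (C \<inter> {x\<in>space M. f x = v}) x)
        = (\<Sum>v\<in>f ` space M. if v = f x then f x * indicator C x else 0)"
      by (intro sum.cong) (auto simp: indicator_def that)
    then show ?thesis using that fin by (simp add: sum.delta')
  qed
  then have "integral\<^sup>L M (\<lambda>x. indicator C x * f x)
      = integral\<^sup>L M (\<lambda>x. \<Sum>v\<in>f ` space M. v * indicator (C \<inter> {x\<in>space M. f x = v}) x)"
    by (intro Bochner_Integration.integral_cong) auto
  also have "\<dots> = (\<Sum>v\<in>f ` space M. v * prob (C \<inter> {x\<in>space M. f x = v}))"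
    by (subst Bochner_Integration.integral_sum)
      (auto intro!: integrable_mult_right integrable_real_indicator simp: less_top[symmetric])
  finally show ?thesis .
qed

lemma expectation_finite_range:
  fixes f :: "'a \<Rightarrow> real"
  assumes "f \<in> borel_measurable M" "finite (f ` space M)"
  shows "expectation f = (\<Sum>v\<in>f ` space M. v * prob {x\<in>space M. f x = v})"
proof -
  have "expectation f = integral\<^sup>L M (\<lambda>x. indicator (space M) x * f x)"
    by (intro Bochner_Integration.integral_cong) auto
  then show ?thesis
    by (simp add: integral_indicator_mult_finite_range[OF assms sets.top] Int_absorb1)
qed

lemma prob_ge_le_exp_moment:
  fixes Z :: "'a \<Rightarrow> real"
  assumes "integrable M (\<lambda>x. exp (s * Z x))" "s > 0"
  shows "prob {x\<in>space M. Z x \<ge> t} \<le> expectation (\<lambda>x. exp (s * Z x)) * exp (- s * t)"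
proof -
  have "{x\<in>space M. Z x \<ge> t} = {x\<in>space M. exp (s * Z x) \<ge> exp (s * t)}"
    using assms(2) by auto
  then show ?thesis
    using integral_Markov_inequality_measure[OF assms(1) sets.top, of "exp (s * t)"]
    by (simp add: exp_minus divide_inverse)
qed

lemma mono_distribution_function:
  fixes Z :: "'a \<Rightarrow> real"
  assumes [measurable]: "Z \<in> borel_measurable M" and "\<And>x. prob {\<omega>\<in>space M. Z \<omega> \<le> x} = F x"
  shows "mono F"
proof
  fix x y :: real assume "x \<le> y"
  then have "prob {\<omega>\<in>space M. Z \<omega> \<le> x} \<le> prob {\<omega>\<in>space M. Z \<omega> \<le> y}"
    by (intro finite_measure_mono) auto
  then show "F x \<le> F y" using assms(2) by simp
qed

end

lemma sum_mult_le_bound_sum_pos: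
  fixes D :: "real \<Rightarrow> real"
  assumes "finite R" and R: "\<And>v. v \<in> R \<Longrightarrow> 0 \<le> v \<and> v \<le> B"
  shows "(\<Sum>v\<in>R. v * D v) \<le> B * (\<Sum>v\<in>{v\<in>R. D v > 0}. D v)"
proof -
  define T where "T = {v\<in>R. D v > 0}"
  have "T \<subseteq> R" by (auto simp: T_def)
  then have "(\<Sum>v\<in>R. v * D v) = (\<Sum>v\<in>T. v * D v) + (\<Sum>v\<in>R-T. v * D v)"
    using sum.subset_diff[OF _ assms(1), of T "\<lambda>v. v * D v"] by (simp add: add.commute)
  also have "(\<Sum>v\<in>R-T. v * D v) \<le> 0"
    by (intro sum_nonpos) (auto simp: T_def intro!: mult_nonneg_nonpos dest: R)
  also have "(\<Sum>v\<in>T. v * D v) \<le> (\<Sum>v\<in>T. B * D v)"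
    by (intro sum_mono mult_right_mono) (auto simp: T_def dest: R)
  finally show ?thesis by (simp add: T_def sum_distrib_left)
qed

lemma exp_le_1_add_sq: "exp (z::real) \<le> 1 + z + z\<^sup>2 * exp \<bar>z\<bar> / 2"
proof -
  obtain t where t: "\<bar>t\<bar> \<le> \<bar>z\<bar>" "exp z = (\<Sum>m<2. z ^ m / fact m) + exp t / fact 2 * z ^ 2"
    using Maclaurin_exp_le[of z 2] by blast
  have "exp t / 2 * z ^ 2 \<le> exp \<bar>z\<bar> / 2 * z ^ 2" using t(1) by (intro mult_right_mono) auto
  then show ?thesis using t(2) by (simp add: numeral_2_eq_2 algebra_simps)
qed

lemma sqrt_mult_divide: "sqrt (a * b / c) = sqrt a * sqrt (b / c)"
  by (simp only: times_divide_eq_right[symmetric] real_sqrt_mult)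

lemma cube_root_ceiling:
  assumes "n \<ge> 1"
  shows "nat \<lceil>real n powr (1/3)\<rceil> \<ge> 1" "real n \<le> real (nat \<lceil>real n powr (1/3)\<rceil>) ^ 3"
    "real (nat \<lceil>real n powr (1/3)\<rceil>) \<le> real n powr (1/3) + 1"
proof -
  have "real n powr (1/3) > 0" using assms by simp
  then show "nat \<lceil>real n powr (1/3)\<rceil> \<ge> 1" "real (nat \<lceil>real n powr (1/3)\<rceil>) \<le> real n powr (1/3) + 1"
    by linarith+
  have "real n = (real n powr (1/3)) ^ 3"
    using assms by (simp add: powr_realpow[symmetric] powr_powr)
  also have "\<dots> \<le> real (nat \<lceil>real n powr (1/3)\<rceil>) ^ 3"
    using \<open>real n powr (1/3) > 0\<close> by (intro power_mono) linarith+
  finally show "real n \<le> real (nat \<lceil>real n powr (1/3)\<rceil>) ^ 3" .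
qed

locale phi_mixing = prob_space M for M :: "'a measure" +
  fixes X :: "nat \<Rightarrow> 'a \<Rightarrow> real"
  assumes random_variable_X: "\<And>i. i \<ge> 1 \<Longrightarrow> X i \<in> borel_measurable M"
    and phi_mix_decreasing: "\<And>n. n \<ge> 1 \<Longrightarrow> phi_mix M X (Suc n) \<le> phi_mix M X n"
begin

abbreviation \<phi> :: "nat \<Rightarrow> real" where "\<phi> \<equiv> phi_mix M X"

lemma gen_sigma_subset_events: "I \<subseteq> {1..} \<Longrightarrow> gen_sigma M X I \<subseteq> events"
  unfolding gen_sigma_def
proof (intro sets.sigma_sets_subset subsetI, clarify)
  fix i and A :: "real set" assume "I \<subseteq> {1..}" "i \<in> I" "A \<in> sets borel"
  then show "X i -` A \<inter> space M \<in> events" using random_variable_X measurable_sets by auto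
qed

lemma subalgebra_gen_measure: "I \<subseteq> {1..} \<Longrightarrow> subalgebra M (gen_measure M X I)"
  unfolding subalgebra_def using gen_sigma_subset_events
  by (auto simp: space_gen_measure sets_gen_measure)

lemma borel_measurable_gen_measureD:
  "I \<subseteq> {1..} \<Longrightarrow> V \<in> borel_measurable (gen_measure M X I) \<Longrightarrow> V \<in> borel_measurable M"
  using measurable_from_subalg subalgebra_gen_measure by blast

lemma vimage_in_gen_sigma:
  assumes "V \<in> borel_measurable (gen_measure M X I)" "T \<in> sets borel"
  shows "{x\<in>space M. V x \<in> T} \<in> gen_sigma M X I"
proof -
  have "{x\<in>space M. V x \<in> T} = V -` T \<inter> space (gen_measure M X I)"
    by (auto simp: space_gen_measure)
  then show ?thesis using measurable_sets[OF assms] by (simp add: sets_gen_measure)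
qed

lemma phi_sets_gen_sigma_bounds:
  assumes "k \<ge> 1"
  shows "0 \<le> phi_sets M (gen_sigma M X {1..k}) (gen_sigma M X {k+n..})"
    and "phi_sets M (gen_sigma M X {1..k}) (gen_sigma M X {k+n..}) \<le> 1"
  using assms by (intro phi_sets_bounds gen_sigma_subset_events; auto simp: gen_sigma_def sigma_sets_top)+

lemma bdd_above_phi_sets_gen_sigma:
  "bdd_above ((\<lambda>k. phi_sets M (gen_sigma M X {1..k}) (gen_sigma M X {k+n..})) ` {1..})"
  by (rule bdd_aboveI[of _ 1]) (use phi_sets_gen_sigma_bounds(2) in auto)

lemma phi_nonneg: "0 \<le> \<phi> n"
  unfolding phi_mix_def
  by (rule order.trans[OF phi_sets_gen_sigma_bounds(1)[of 1 n] cSUP_upper[OF _ bdd_above_phi_sets_gen_sigma]])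
    auto

lemma phi_le_1: "\<phi> n \<le> 1"
  unfolding phi_mix_def by (rule cSUP_least) (use phi_sets_gen_sigma_bounds(2) in auto)

lemma measure_Int_le_phi:
  assumes "k \<ge> 1" "A \<in> gen_sigma M X {1..k}" "B \<in> gen_sigma M X {k+n..}"
  shows "prob (A \<inter> B) \<le> prob A * (prob B + \<phi> n)"
proof -
  have "prob (A \<inter> B) \<le> prob A * (prob B + phi_sets M (gen_sigma M X {1..k}) (gen_sigma M X {k+n..}))"
    using assms by (intro measure_Int_le_phi_sets gen_sigma_subset_events) auto
  also have "\<dots> \<le> prob A * (prob B + \<phi> n)"
    unfolding phi_mix_def using assms(1)
    by (intro mult_left_mono add_left_mono cSUP_upper[OF _ bdd_above_phi_sets_gen_sigma]) auto
  finally show ?thesis .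
qed

lemma phi_antimono:
  assumes "1 \<le> L" "L \<le> g"
  shows "\<phi> g \<le> \<phi> L"
  using assms(2)
proof (induction g rule: dec_induct)
  case (step m)
  then show ?case using phi_mix_decreasing[of m] assms(1) by linarith
qed simp

text \<open>Only the values \<open>v\<close> of \<open>V\<close> with \<open>P(A \<inter> {V = v}) > P(A) P(V = v)\<close> contribute to the covariance;
  together they form one event of the future, to which the mixing bound applies.\<close>

lemma integral_indicator_mult_le:
  assumes k: "k \<ge> 1" and A: "A \<in> gen_sigma M X {1..k}"
    and V: "V \<in> borel_measurable (gen_measure M X {k+g..})" and fin: "finite (V ` space M)"
    and V_bounds: "\<And>x. x \<in> space M \<Longrightarrow> 0 \<le> V x \<and> V x \<le> B"
  shows "integral\<^sup>L M (\<lambda>x. indicator A x * V x) \<le> prob A * (expectation V + \<phi> g * B)"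
proof -
  have [measurable]: "V \<in> borel_measurable M"
    using k by (intro borel_measurable_gen_measureD[OF _ V]) auto
  have [measurable]: "A \<in> events" using A gen_sigma_subset_events[of "{1..k}"] by auto
  define level where "level v = {x\<in>space M. V x = v}" for v
  define D where "D v = prob (A \<inter> level v) - prob A * prob (level v)" for v
  define T where "T = {v\<in>V ` space M. D v > 0}"
  have [measurable]: "level v \<in> events" for v unfolding level_def by measurable
  have "finite T" using fin by (simp add: T_def)
  have "integral\<^sup>L M (\<lambda>x. indicator A x * V x) = (\<Sum>v\<in>V ` space M. v * prob (A \<inter> level v))"
    "expectation V = (\<Sum>v\<in>V ` space M. v * prob (level v))"
    unfolding level_def
    by (simp_all add: integral_indicator_mult_finite_range[OF _ fin] expectation_finite_range[OF _ fin])
  then have "integral\<^sup>L M (\<lambda>x. indicator A x * V x) - prob A * expectation V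
      = (\<Sum>v\<in>V ` space M. v * D v)"
    by (simp add: D_def sum_distrib_left sum_subtractf algebra_simps)
  also have "\<dots> \<le> B * (\<Sum>v\<in>T. D v)"
    unfolding T_def using fin V_bounds by (intro sum_mult_le_bound_sum_pos) auto
  also have "(\<Sum>v\<in>T. D v) = prob (A \<inter> {x\<in>space M. V x \<in> T}) - prob A * prob {x\<in>space M. V x \<in> T}"
  proof -
    have "{x\<in>space M. V x \<in> T} = (\<Union>v\<in>T. level v)" "A \<inter> {x\<in>space M. V x \<in> T} = (\<Union>v\<in>T. A \<inter> level v)"
      by (auto simp: level_def)
    moreover have "prob (\<Union>v\<in>T. level v) = (\<Sum>v\<in>T. prob (level v))"
      "prob (\<Union>v\<in>T. A \<inter> level v) = (\<Sum>v\<in>T. prob (A \<inter> level v))"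
      using \<open>finite T\<close>
      by (intro finite_measure_finite_Union; auto simp: disjoint_family_on_def level_def)+
    ultimately show ?thesis by (simp add: D_def sum_subtractf sum_distrib_left)
  qed
  also have "B * \<dots> \<le> B * (prob A * \<phi> g)"
  proof (rule mult_left_mono)
    have T_gen: "{x\<in>space M. V x \<in> T} \<in> gen_sigma M X {k+g..}"
      using \<open>finite T\<close> by (intro vimage_in_gen_sigma[OF V] borel_closed finite_imp_closed)
    show "prob (A \<inter> {x\<in>space M. V x \<in> T}) - prob A * prob {x\<in>space M. V x \<in> T} \<le> prob A * \<phi> g"
      using measure_Int_le_phi[OF k A T_gen] by (simp add: algebra_simps)
    show "0 \<le> B" using V_bounds not_empty by force
  qed
  finally show ?thesis by (simp add: algebra_simps)
qed

lemma expectation_mult_le_phi: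
  assumes k: "k \<ge> 1"
    and U: "U \<in> borel_measurable (gen_measure M X {1..k})" and finU: "finite (U ` space M)"
    and U_nonneg: "\<And>x. x \<in> space M \<Longrightarrow> 0 \<le> U x"
    and V: "V \<in> borel_measurable (gen_measure M X {k+g..})" and finV: "finite (V ` space M)"
    and V_bounds: "\<And>x. x \<in> space M \<Longrightarrow> 0 \<le> V x \<and> V x \<le> B"
  shows "expectation (\<lambda>x. U x * V x) \<le> expectation U * (expectation V + \<phi> g * B)"
proof -
  have U_meas[measurable]: "U \<in> borel_measurable M" and [measurable]: "V \<in> borel_measurable M"
    using k by (auto intro: borel_measurable_gen_measureD[OF _ U] borel_measurable_gen_measureD[OF _ V])
  define level where "level u = {x\<in>space M. U x = u}" for u
  have [measurable]: "level u \<in> events" for u unfolding level_def by measurable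
  have level_gen: "level u \<in> gen_sigma M X {1..k}" for u
    using vimage_in_gen_sigma[OF U, of "{u}"] by (simp add: level_def)
  have "0 \<le> B" using V_bounds not_empty by force
  then have "integrable M (\<lambda>x. indicator (level u) x * V x)" for u
    by (intro integrable_const_bound[where B=B]) (auto simp: indicator_def V_bounds)
  moreover have "U x * V x = (\<Sum>u\<in>U ` space M. u * (indicator (level u) x * V x))" if "x \<in> space M" for x
  proof -
    have "(\<Sum>u\<in>U ` space M. u * (indicator (level u) x * V x))
        = (\<Sum>u\<in>U ` space M. if u = U x then U x * V x else 0)"
      by (intro sum.cong) (auto simp: indicator_def that level_def)
    then show ?thesis using that finU by (simp add: sum.delta')
  qed
  ultimately have "expectation (\<lambda>x. U x * V x)
      = (\<Sum>u\<in>U ` space M. u * integral\<^sup>L M (\<lambda>x. indicator (level u) x * V x))"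
    by (simp add: Bochner_Integration.integral_cong[where g="\<lambda>x. \<Sum>u\<in>U ` space M. _ u x"]
        Bochner_Integration.integral_sum)
  also have "\<dots> \<le> (\<Sum>u\<in>U ` space M. u * (prob (level u) * (expectation V + \<phi> g * B)))"
    by (intro sum_mono mult_left_mono integral_indicator_mult_le[OF k level_gen V finV V_bounds])
      (auto dest: U_nonneg)
  also have "\<dots> = expectation U * (expectation V + \<phi> g * B)"
    unfolding expectation_finite_range[OF U_meas finU] level_def sum_distrib_right
    by (intro sum.cong refl) (simp add: algebra_simps)
  finally show ?thesis .
qed

end

definition indic_le :: "(nat \<Rightarrow> 'a \<Rightarrow> real) \<Rightarrow> real \<Rightarrow> nat \<Rightarrow> 'a \<Rightarrow> real" where
  "indic_le X y i \<omega> = (if X i \<omega> \<le> y then 1 else 0)"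

definition centered_sum :: "(nat \<Rightarrow> 'a \<Rightarrow> real) \<Rightarrow> real \<Rightarrow> real \<Rightarrow> nat set \<Rightarrow> 'a \<Rightarrow> real" where
  "centered_sum X y q I \<omega> = (\<Sum>i\<in>I. indic_le X y i \<omega> - q)"

lemma indic_le_measurable_gen_measure:
  assumes "i \<in> I"
  shows "indic_le X y i \<in> borel_measurable (gen_measure M X I)"
proof -
  have "indic_le X y i = (\<lambda>\<omega>. indicator {..y} (X i \<omega>))" by (auto simp: indic_le_def fun_eq_iff)
  then show ?thesis
    using measurable_compose[OF X_measurable_gen_measure[OF assms] borel_measurable_indicator[of "{..y}"]]
    by simp
qed

lemma centered_sum_measurable_gen_measure:
  "I \<subseteq> J \<Longrightarrow> centered_sum X y q I \<in> borel_measurable (gen_measure M X J)"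
  unfolding centered_sum_def by (auto intro!: borel_measurable_sum borel_measurable_diff indic_le_measurable_gen_measure)

lemma sum_indic_le: "finite I \<Longrightarrow> (\<Sum>i\<in>I. indic_le X y i \<omega>) = real (card {i\<in>I. X i \<omega> \<le> y})"
  unfolding indic_le_def by (simp add: sum.If_cases Int_def)

lemma centered_sum_eq_count: "finite I \<Longrightarrow> centered_sum X y q I \<omega> = real (card {i\<in>I. X i \<omega> \<le> y}) - real (card I) * q"
  unfolding centered_sum_def by (simp add: sum_subtractf sum_indic_le)

lemma finite_range_centered_sum:
  assumes "finite I"
  shows "finite (centered_sum X y q I ` A)"
proof (rule finite_subset)
  show "centered_sum X y q I ` A \<subseteq> (\<lambda>k. real k - real (card I) * q) ` {..card I}"
    using assms by (auto simp: centered_sum_eq_count intro!: imageI card_mono)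
qed simp

lemma abs_centered_sum_le_card:
  assumes "0 \<le> q" "q \<le> 1"
  shows "\<bar>centered_sum X y q I \<omega>\<bar> \<le> real (card I)"
proof -
  have "\<bar>centered_sum X y q I \<omega>\<bar> \<le> (\<Sum>i\<in>I. \<bar>indic_le X y i \<omega> - q\<bar>)"
    unfolding centered_sum_def by (rule sum_abs)
  also have "\<dots> \<le> (\<Sum>i\<in>I. 1)" using assms by (intro sum_mono) (auto simp: indic_le_def)
  finally show ?thesis by simp
qed

lemma centered_sum_union:
  "finite I \<Longrightarrow> finite J \<Longrightarrow> I \<inter> J = {} \<Longrightarrow>
    centered_sum X y q (I \<union> J) \<omega> = centered_sum X y q I \<omega> + centered_sum X y q J \<omega>"
  unfolding centered_sum_def by (rule sum.union_disjoint)

lemma emp_df_eq_centered_sum: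
  "n \<ge> 1 \<Longrightarrow> emp_df X n \<omega> x - q = centered_sum X x q {1..n} \<omega> / real n"
  by (simp add: emp_df_def centered_sum_eq_count field_simps)

lemma abs_emp_df_diff_le_iff:
  "n \<ge> 1 \<Longrightarrow> \<bar>emp_df X n \<omega> x - q\<bar> \<le> s \<longleftrightarrow> \<bar>centered_sum X x q {1..n} \<omega>\<bar> \<le> real n * s"
  by (simp add: emp_df_eq_centered_sum abs_div divide_le_eq mult.commute)

lemma mono_emp_df: "mono (emp_df X n \<omega>)"
  unfolding emp_df_def by (intro monoI divide_right_mono of_nat_mono card_mono) auto

text \<open>Block \<open>j\<close> consists of the indices \<open>j L + 1, \<dots>, (j + 1) L\<close>, i.e. those \<open>i\<close> with \<open>(i - 1) div L = j\<close>;
  \<open>alt_blocks n L r m\<close> is the union of the blocks \<open>j < m\<close> of parity \<open>r\<close>, cut off at \<open>n\<close>.\<close>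

definition block :: "nat \<Rightarrow> nat \<Rightarrow> nat \<Rightarrow> nat set" where
  "block n L j = {j * L<..min n (Suc j * L)}"

definition alt_blocks :: "nat \<Rightarrow> nat \<Rightarrow> nat \<Rightarrow> nat \<Rightarrow> nat set" where
  "alt_blocks n L r m = {i\<in>{1..n}. i \<le> m * L \<and> ((i - 1) div L) mod 2 = r}"

lemma block_index: "j * L < i \<Longrightarrow> i \<le> Suc j * L \<Longrightarrow> (i - 1) div L = j"
  by (rule div_nat_eqI) (auto simp: mult.commute)

lemma finite_alt_blocks: "finite (alt_blocks n L r m)"
  by (simp add: alt_blocks_def)

lemma alt_blocks_0 [simp]: "alt_blocks n L r 0 = {}"
  by (simp add: alt_blocks_def)

lemma alt_blocks_Suc:
  "alt_blocks n L r (Suc m) = alt_blocks n L r m \<union> (if m mod 2 = r then block n L m else {})"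
proof (intro set_eqI iffI)
  fix i assume "i \<in> alt_blocks n L r (Suc m)"
  then show "i \<in> alt_blocks n L r m \<union> (if m mod 2 = r then block n L m else {})"
    using block_index[of m L i] by (cases "i \<le> m * L") (auto simp: alt_blocks_def block_def)
next
  fix i assume "i \<in> alt_blocks n L r m \<union> (if m mod 2 = r then block n L m else {})"
  then show "i \<in> alt_blocks n L r (Suc m)"
    using block_index[of m L i] by (auto simp: alt_blocks_def block_def split: if_splits)
qed

lemma alt_blocks_Int_block: "alt_blocks n L r m \<inter> block n L m = {}"
  by (auto simp: alt_blocks_def block_def)

lemma alt_blocks_subset:
  assumes "L \<ge> 1" "m mod 2 = r" "1 \<le> m"
  shows "alt_blocks n L r m \<subseteq> {1..(m - 1) * L}"
proof
  fix i assume i: "i \<in> alt_blocks n L r m"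
  then have "(i - 1) div L < m"
    using assms(1) by (auto simp: alt_blocks_def div_less_iff_less_mult)
  moreover have "(i - 1) div L \<noteq> m - 1"
  proof
    assume "(i - 1) div L = m - 1"
    then have "(m - 1) mod 2 = m mod 2" using i assms(2) by (simp add: alt_blocks_def)
    with assms(3) show False by (cases m) (simp_all add: mod_Suc split: if_splits)
  qed
  ultimately have "(i - 1) div L < m - 1" by linarith
  then show "i \<in> {1..(m - 1) * L}"
    using i assms(1) by (auto simp: alt_blocks_def div_less_iff_less_mult)
qed

lemma alt_blocks_partition:
  assumes "L \<ge> 1"
  shows "{1..n} = alt_blocks n L 0 n \<union> alt_blocks n L 1 n" "alt_blocks n L 0 n \<inter> alt_blocks n L 1 n = {}"
proof -
  have "i \<le> n * L" if "i \<le> n" for i using that assms by (metis le_trans mult_le_mono2 mult_1_right)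
  then show "{1..n} = alt_blocks n L 0 n \<union> alt_blocks n L 1 n" by (auto simp: alt_blocks_def)
qed (auto simp: alt_blocks_def)

lemma card_blocks_below:
  assumes "L \<ge> 1"
  shows "real (card {j. j < m \<and> j * L < n}) \<le> real n / real L + 1"
proof -
  have "{j. j < m \<and> j * L < n} \<subseteq> {..(n - 1) div L}"
    using assms by (auto simp: less_eq_div_iff_mult_less_eq)
  then have "card {j. j < m \<and> j * L < n} \<le> Suc ((n - 1) div L)"
    using card_mono[of "{..(n - 1) div L}"] by simp
  moreover have "(n - 1) div L * L \<le> n"
    using div_times_less_eq_dividend[of "n - 1" L] by linarith
  then have "real ((n - 1) div L) \<le> real n / real L"
    using assms by (simp add: pos_le_divide_eq flip: of_nat_mult)
  ultimately show ?thesis by linarith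
qed

lemma card_blocks_below_Suc:
  "card {j. j < Suc m \<and> j * L < n} = card {j. j < m \<and> j * L < n} + (if m * L < n then 1 else 0)"
proof -
  have "{j. j < Suc m \<and> j * L < n} = {j. j < m \<and> j * L < n} \<union> (if m * L < n then {m} else {})"
    by (auto simp: less_Suc_eq)
  then show ?thesis by (auto simp: card_insert_if)
qed

context phi_mixing
begin

context
  fixes y q
  assumes marginal: "\<And>i. i \<ge> 1 \<Longrightarrow> prob {\<omega>\<in>space M. X i \<omega> \<le> y} = q"
begin

lemma q_bounds: "0 \<le> q" "q \<le> 1"
  using marginal[of 1] by auto

lemma indic_le_measurable[measurable]: "i \<ge> 1 \<Longrightarrow> indic_le X y i \<in> borel_measurable M"
  by (rule borel_measurable_gen_measureD[of "{i}"]) (auto intro: indic_le_measurable_gen_measure)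

lemma centered_sum_measurable[measurable]: "I \<subseteq> {1..} \<Longrightarrow> centered_sum X y q I \<in> borel_measurable M"
  by (rule borel_measurable_gen_measureD[OF _ centered_sum_measurable_gen_measure[OF order.refl]])

lemma integrable_indic_le: "i \<ge> 1 \<Longrightarrow> integrable M (indic_le X y i)"
  by (rule integrable_const_bound[where B=1]) (auto simp: indic_le_def)

lemma expectation_indic_le: "i \<ge> 1 \<Longrightarrow> expectation (indic_le X y i) = q"
proof -
  assume i: "i \<ge> 1"
  then have [measurable]: "X i \<in> borel_measurable M" by (rule random_variable_X)
  have "expectation (indic_le X y i) = expectation (indicator {\<omega>\<in>space M. X i \<omega> \<le> y})"
    by (intro Bochner_Integration.integral_cong) (auto simp: indic_le_def)
  then show ?thesis using marginal[OF i] by simp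
qed

lemma integrable_centered_product:
  assumes "i \<ge> 1" "j \<ge> 1"
  shows "integrable M (\<lambda>\<omega>. (indic_le X y i \<omega> - q) * (indic_le X y j \<omega> - q))"
proof (rule integrable_const_bound[where B=1])
  show "(\<lambda>\<omega>. (indic_le X y i \<omega> - q) * (indic_le X y j \<omega> - q)) \<in> borel_measurable M"
    using assms by measurable
qed (use q_bounds in \<open>auto simp: indic_le_def abs_mult intro!: mult_le_one\<close>)

lemma expectation_centered_product:
  assumes "i \<ge> 1" "j \<ge> 1"
  shows "expectation (\<lambda>\<omega>. (indic_le X y i \<omega> - q) * (indic_le X y j \<omega> - q))
    = expectation (\<lambda>\<omega>. indic_le X y i \<omega> * indic_le X y j \<omega>) - q\<^sup>2"
proof -
  have "integrable M (\<lambda>\<omega>. indic_le X y i \<omega> * indic_le X y j \<omega>)"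
  proof (rule integrable_const_bound[where B=1])
    show "(\<lambda>\<omega>. indic_le X y i \<omega> * indic_le X y j \<omega>) \<in> borel_measurable M" using assms by measurable
  qed (auto simp: indic_le_def)
  moreover have "(indic_le X y i \<omega> - q) * (indic_le X y j \<omega> - q)
      = indic_le X y i \<omega> * indic_le X y j \<omega> - q * indic_le X y i \<omega> - q * indic_le X y j \<omega> + q\<^sup>2" for \<omega>
    by (simp add: algebra_simps power2_eq_square)
  ultimately show ?thesis
    using assms by (simp add: integrable_indic_le expectation_indic_le prob_space power2_eq_square)
qed

definition cov_bound :: "nat \<Rightarrow> nat \<Rightarrow> real" where
  "cov_bound i j = (if i = j then 1 else \<phi> (if i < j then j - i else i - j))"

lemma expectation_centered_product_less:
  assumes "1 \<le> i" "i < j"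
  shows "expectation (\<lambda>\<omega>. (indic_le X y i \<omega> - q) * (indic_le X y j \<omega> - q)) \<le> \<phi> (j - i)"
proof -
  have "expectation (\<lambda>\<omega>. indic_le X y i \<omega> * indic_le X y j \<omega>)
      \<le> expectation (indic_le X y i) * (expectation (indic_le X y j) + \<phi> (j - i) * 1)"
    using assms
    by (intro expectation_mult_le_phi indic_le_measurable_gen_measure)
      (auto simp: indic_le_def intro: finite_subset[of _ "{0, 1}"])
  also have "\<dots> = q * q + q * \<phi> (j - i)" using assms by (simp add: expectation_indic_le algebra_simps)
  also have "q * \<phi> (j - i) \<le> \<phi> (j - i)" using q_bounds phi_nonneg by (simp add: mult_left_le_one_le)
  finally show ?thesis using assms by (simp add: expectation_centered_product power2_eq_square)
qed

lemma expectation_centered_product_le_cov_bound: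
  assumes "1 \<le> i" "1 \<le> j"
  shows "expectation (\<lambda>\<omega>. (indic_le X y i \<omega> - q) * (indic_le X y j \<omega> - q)) \<le> cov_bound i j"
proof (cases i j rule: linorder_cases)
  case less
  then show ?thesis using expectation_centered_product_less[OF assms(1) less] by (simp add: cov_bound_def)
next
  case greater
  then show ?thesis using expectation_centered_product_less[OF assms(2) greater]
    by (simp add: cov_bound_def mult.commute)
next
  case equal
  have "(\<lambda>\<omega>. indic_le X y i \<omega> * indic_le X y i \<omega>) = indic_le X y i" by (simp add: indic_le_def fun_eq_iff)
  then have "expectation (\<lambda>\<omega>. (indic_le X y i \<omega> - q) * (indic_le X y j \<omega> - q)) = q - q\<^sup>2"
    using expectation_centered_product[OF assms] equal assms by (simp add: expectation_indic_le)
  also have "\<dots> \<le> 1" using q_bounds zero_le_power2[of q] by linarith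
  finally show ?thesis using equal by (simp add: cov_bound_def)
qed

lemma expectation_centered_sum_sq:
  assumes "finite I" "I \<subseteq> {1..}"
  shows "expectation (\<lambda>\<omega>. (centered_sum X y q I \<omega>)\<^sup>2)
    = (\<Sum>i\<in>I. \<Sum>j\<in>I. expectation (\<lambda>\<omega>. (indic_le X y i \<omega> - q) * (indic_le X y j \<omega> - q)))"
proof -
  have "expectation (\<lambda>\<omega>. (centered_sum X y q I \<omega>)\<^sup>2)
      = expectation (\<lambda>\<omega>. \<Sum>i\<in>I. \<Sum>j\<in>I. (indic_le X y i \<omega> - q) * (indic_le X y j \<omega> - q))"
    unfolding centered_sum_def power2_eq_square sum_product by simp
  also have "\<dots> = (\<Sum>i\<in>I. expectation (\<lambda>\<omega>. \<Sum>j\<in>I. (indic_le X y i \<omega> - q) * (indic_le X y j \<omega> - q)))"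
    using assms by (intro Bochner_Integration.integral_sum Bochner_Integration.integrable_sum
        integrable_centered_product) auto
  also have "\<dots> = (\<Sum>i\<in>I. \<Sum>j\<in>I. expectation (\<lambda>\<omega>. (indic_le X y i \<omega> - q) * (indic_le X y j \<omega> - q)))"
    using assms by (intro sum.cong refl Bochner_Integration.integral_sum integrable_centered_product) auto
  finally show ?thesis .
qed

lemma sum_cov_bound_row_le:
  assumes "a < i" "i \<le> b" "b \<le> a + L"
  shows "(\<Sum>j\<in>{a<..b}. cov_bound i j) \<le> 1 + 2 * (\<Sum>m\<in>{1..L}. \<phi> m)"
proof -
  have split: "{a<..b} = {a<..<i} \<union> ({i} \<union> {i<..b})" using assms by auto
  have "(\<Sum>j\<in>{a<..b}. cov_bound i j)
      = (\<Sum>j\<in>{a<..<i}. cov_bound i j) + (cov_bound i i + (\<Sum>j\<in>{i<..b}. cov_bound i j))"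
    unfolding split by (subst sum.union_disjoint, simp, simp, force)+ simp
  also have "(\<Sum>j\<in>{a<..<i}. cov_bound i j) = (\<Sum>j\<in>{a<..<i}. \<phi> (i - j))"
    by (intro sum.cong) (auto simp: cov_bound_def)
  also have "(\<Sum>j\<in>{i<..b}. cov_bound i j) = (\<Sum>j\<in>{i<..b}. \<phi> (j - i))"
    by (intro sum.cong) (auto simp: cov_bound_def)
  also have "(\<Sum>j\<in>{a<..<i}. \<phi> (i - j)) = (\<Sum>m\<in>{1..i-a-1}. \<phi> m)"
    by (rule sum.reindex_bij_witness[of _ "\<lambda>m. i - m" "\<lambda>j. i - j"]) auto
  also have "(\<Sum>j\<in>{i<..b}. \<phi> (j - i)) = (\<Sum>m\<in>{1..b-i}. \<phi> m)"
    by (rule sum.reindex_bij_witness[of _ "\<lambda>m. i + m" "\<lambda>j. j - i"]) auto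
  also have "(\<Sum>m\<in>{1..i-a-1}. \<phi> m) \<le> (\<Sum>m\<in>{1..L}. \<phi> m)"
    using assms phi_nonneg by (intro sum_mono2) auto
  also have "(\<Sum>m\<in>{1..b-i}. \<phi> m) \<le> (\<Sum>m\<in>{1..L}. \<phi> m)"
    using assms phi_nonneg by (intro sum_mono2) auto
  finally show ?thesis by (simp add: cov_bound_def)
qed

lemma expectation_centered_sum_sq_block:
  assumes "b \<le> a + L"
  shows "expectation (\<lambda>\<omega>. (centered_sum X y q {a<..b} \<omega>)\<^sup>2)
    \<le> real (card {a<..b}) * (1 + 2 * (\<Sum>m\<in>{1..L}. \<phi> m))"
proof -
  have "expectation (\<lambda>\<omega>. (centered_sum X y q {a<..b} \<omega>)\<^sup>2)
      = (\<Sum>i\<in>{a<..b}. \<Sum>j\<in>{a<..b}. expectation (\<lambda>\<omega>. (indic_le X y i \<omega> - q) * (indic_le X y j \<omega> - q)))"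
    by (rule expectation_centered_sum_sq) auto
  also have "\<dots> \<le> (\<Sum>i\<in>{a<..b}. \<Sum>j\<in>{a<..b}. cov_bound i j)"
    by (intro sum_mono expectation_centered_product_le_cov_bound) auto
  also have "\<dots> \<le> (\<Sum>i\<in>{a<..b}. 1 + 2 * (\<Sum>m\<in>{1..L}. \<phi> m))"
    using assms by (intro sum_mono sum_cov_bound_row_le) auto
  finally show ?thesis by simp
qed

lemma expectation_centered_sum:
  assumes "finite I" "I \<subseteq> {1..}"
  shows "expectation (centered_sum X y q I) = 0"
proof -
  have "expectation (\<lambda>\<omega>. indic_le X y i \<omega> - q) = 0" if "i \<in> I" for i
    using that assms
    by (subst Bochner_Integration.integral_diff) (auto simp: integrable_indic_le expectation_indic_le prob_space)
  then show ?thesis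
    unfolding centered_sum_def using assms
    by (subst Bochner_Integration.integral_sum) (auto simp: integrable_indic_le)
qed

lemma mgf_block_le:
  assumes "b \<le> a + L" "\<bar>\<mu>\<bar> * real L \<le> h"
  shows "expectation (\<lambda>\<omega>. exp (\<mu> * centered_sum X y q {a<..b} \<omega>))
    \<le> 1 + \<mu>\<^sup>2 * real (card {a<..b}) * (1 + 2 * (\<Sum>m\<in>{1..L}. \<phi> m)) * exp h / 2"
proof -
  let ?Z = "centered_sum X y q {a<..b}"
  have [measurable]: "?Z \<in> borel_measurable M" by (rule centered_sum_measurable) auto
  have Z_bound: "\<bar>?Z \<omega>\<bar> \<le> real L" for \<omega>
    using abs_centered_sum_le_card[OF q_bounds, of X y "{a<..b}" \<omega>] assms(1) by simp
  have muZ: "\<bar>\<mu> * ?Z \<omega>\<bar> \<le> h" for \<omega>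
    using mult_left_mono[OF Z_bound, of "\<bar>\<mu>\<bar>" \<omega>] assms(2) by (simp add: abs_mult)
  have pointwise: "exp (\<mu> * ?Z \<omega>) \<le> 1 + \<mu> * ?Z \<omega> + \<mu>\<^sup>2 * (exp h / 2) * (?Z \<omega>)\<^sup>2" for \<omega>
  proof -
    have "exp \<bar>\<mu> * ?Z \<omega>\<bar> \<le> exp h" using muZ[of \<omega>] by simp
    then have "(\<mu> * ?Z \<omega>)\<^sup>2 * exp \<bar>\<mu> * ?Z \<omega>\<bar> / 2 \<le> (\<mu> * ?Z \<omega>)\<^sup>2 * exp h / 2"
      by (intro divide_right_mono mult_left_mono) auto
    then show ?thesis using exp_le_1_add_sq[of "\<mu> * ?Z \<omega>"] by (simp add: power_mult_distrib algebra_simps)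
  qed
  have int_Z: "integrable M ?Z"
    using Z_bound by (intro integrable_const_bound[where B="real L"]) auto
  have int_Z2: "integrable M (\<lambda>\<omega>. (?Z \<omega>)\<^sup>2)"
  proof (rule integrable_const_bound[where B="real L ^ 2"])
    show "AE \<omega> in M. norm ((?Z \<omega>)\<^sup>2) \<le> real L ^ 2"
      using power_mono[OF Z_bound abs_ge_zero, where n=2] by (intro AE_I2) simp
  qed measurable
  have "integrable M (\<lambda>\<omega>. exp (\<mu> * ?Z \<omega>))"
    using muZ by (intro integrable_const_bound[where B="exp h"]) (auto simp: abs_le_iff)
  then have "expectation (\<lambda>\<omega>. exp (\<mu> * ?Z \<omega>))
      \<le> expectation (\<lambda>\<omega>. 1 + \<mu> * ?Z \<omega> + \<mu>\<^sup>2 * (exp h / 2) * (?Z \<omega>)\<^sup>2)"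
    using int_Z int_Z2 pointwise by (intro integral_mono) auto
  also have "\<dots> = 1 + \<mu> * expectation ?Z + \<mu>\<^sup>2 * (exp h / 2) * expectation (\<lambda>\<omega>. (?Z \<omega>)\<^sup>2)"
    using int_Z int_Z2 by (simp add: prob_space)
  also have "\<mu>\<^sup>2 * (exp h / 2) * expectation (\<lambda>\<omega>. (?Z \<omega>)\<^sup>2)
      \<le> \<mu>\<^sup>2 * (exp h / 2) * (real (card {a<..b}) * (1 + 2 * (\<Sum>m\<in>{1..L}. \<phi> m)))"
    by (intro mult_left_mono expectation_centered_sum_sq_block assms(1)) auto
  finally show ?thesis
    using expectation_centered_sum[of "{a<..b}"] by (force simp: field_simps)
qed

text \<open>The blocks of parity \<open>r\<close> before block \<open>m\<close> end at least one whole block before it starts, so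
  the mixing inequality decouples them from block \<open>m\<close> at the price \<open>\<phi> L\<close>.\<close>

lemma expectation_exp_alt_blocks_block_le:
  assumes L: "L \<ge> 1" and r: "m mod 2 = r"
    and Z_bound: "\<And>\<omega>. \<bar>\<mu> * centered_sum X y q (block n L m) \<omega>\<bar> \<le> h"
  shows "expectation (\<lambda>\<omega>. exp (\<mu> * centered_sum X y q (alt_blocks n L r m) \<omega>)
        * exp (\<mu> * centered_sum X y q (block n L m) \<omega>))
    \<le> expectation (\<lambda>\<omega>. exp (\<mu> * centered_sum X y q (alt_blocks n L r m) \<omega>))
      * (expectation (\<lambda>\<omega>. exp (\<mu> * centered_sum X y q (block n L m) \<omega>)) + \<phi> L * exp h)"
proof (cases "m = 0")
  case True
  then show ?thesis using phi_nonneg[of L] by (simp add: centered_sum_def prob_space)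
next
  case False
  let ?S = "centered_sum X y q (alt_blocks n L r m)"
  let ?Z = "centered_sum X y q (block n L m)"
  define k where "k = max 1 ((m - 1) * L)"
  have "alt_blocks n L r m \<subseteq> {1..k}"
    using alt_blocks_subset[OF L r] False by (force simp: k_def)
  then have [measurable]: "?S \<in> borel_measurable (gen_measure M X {1..k})"
    by (rule centered_sum_measurable_gen_measure)
  have "block n L m \<subseteq> {k + L..}"
    using False by (cases m) (auto simp: k_def block_def)
  then have [measurable]: "?Z \<in> borel_measurable (gen_measure M X {k + L..})"
    by (rule centered_sum_measurable_gen_measure)
  have "(\<lambda>\<omega>. exp (\<mu> * ?S \<omega>)) \<in> borel_measurable (gen_measure M X {1..k})"
    "(\<lambda>\<omega>. exp (\<mu> * ?Z \<omega>)) \<in> borel_measurable (gen_measure M X {k + L..})"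
    by measurable
  moreover have "finite ((\<lambda>\<omega>. exp (\<mu> * centered_sum X y q I \<omega>)) ` space M)" if "finite I" for I
    using finite_imageI[OF finite_range_centered_sum[OF that], of "\<lambda>z. exp (\<mu> * z)"]
    by (simp add: image_image)
  moreover have "0 \<le> exp (\<mu> * ?Z \<omega>) \<and> exp (\<mu> * ?Z \<omega>) \<le> exp h" for \<omega>
    using Z_bound[of \<omega>] by (simp add: abs_le_iff)
  moreover have "k \<ge> 1" by (simp add: k_def)
  ultimately show ?thesis
    by (intro expectation_mult_le_phi[where k=k and g=L and B="exp h"])
      (auto simp: finite_alt_blocks block_def)
qed

lemma mgf_alt_blocks_Suc_le:
  assumes L: "L \<ge> 1" and mu: "\<bar>\<mu>\<bar> * real L \<le> h" and r: "m mod 2 = r"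
  shows "expectation (\<lambda>\<omega>. exp (\<mu> * centered_sum X y q (alt_blocks n L r (Suc m)) \<omega>))
    \<le> expectation (\<lambda>\<omega>. exp (\<mu> * centered_sum X y q (alt_blocks n L r m) \<omega>))
      * (1 + \<mu>\<^sup>2 * real (card (block n L m)) * (1 + 2 * (\<Sum>k\<in>{1..L}. \<phi> k)) * exp h / 2 + \<phi> L * exp h)"
proof -
  let ?S = "centered_sum X y q (alt_blocks n L r m)"
  let ?Z = "centered_sum X y q (block n L m)"
  have "finite (block n L m)" by (simp add: block_def)
  then have product: "exp (\<mu> * centered_sum X y q (alt_blocks n L r (Suc m)) \<omega>) = exp (\<mu> * ?S \<omega>) * exp (\<mu> * ?Z \<omega>)"
    for \<omega>
    using alt_blocks_Int_block[of n L r m] r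
    by (simp add: alt_blocks_Suc centered_sum_union finite_alt_blocks distrib_left exp_add)
  have "\<bar>?Z \<omega>\<bar> \<le> real L" for \<omega>
    using abs_centered_sum_le_card[OF q_bounds, of X y "block n L m" \<omega>] by (simp add: block_def)
  then have "\<bar>\<mu> * ?Z \<omega>\<bar> \<le> h" for \<omega>
    using mult_left_mono[of "\<bar>?Z \<omega>\<bar>" "real L" "\<bar>\<mu>\<bar>"] mu by (simp add: abs_mult)
  then have "expectation (\<lambda>\<omega>. exp (\<mu> * ?S \<omega>) * exp (\<mu> * ?Z \<omega>))
      \<le> expectation (\<lambda>\<omega>. exp (\<mu> * ?S \<omega>)) * (expectation (\<lambda>\<omega>. exp (\<mu> * ?Z \<omega>)) + \<phi> L * exp h)"
    by (rule expectation_exp_alt_blocks_block_le[OF L r])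
  also have "\<dots> \<le> expectation (\<lambda>\<omega>. exp (\<mu> * ?S \<omega>))
      * (1 + \<mu>\<^sup>2 * real (card (block n L m)) * (1 + 2 * (\<Sum>k\<in>{1..L}. \<phi> k)) * exp h / 2 + \<phi> L * exp h)"
    using mgf_block_le[OF _ mu, of "min n (Suc m * L)" "m * L"]
    by (intro mult_left_mono) (auto simp: block_def)
  finally show ?thesis unfolding product .
qed

lemma mgf_alt_blocks_le:
  assumes L: "L \<ge> 1" and mu: "\<bar>\<mu>\<bar> * real L \<le> h"
  shows "expectation (\<lambda>\<omega>. exp (\<mu> * centered_sum X y q (alt_blocks n L r m) \<omega>))
    \<le> exp (\<mu>\<^sup>2 * real (min n (m * L)) * (1 + 2 * (\<Sum>k\<in>{1..L}. \<phi> k)) * exp h / 2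
           + \<phi> L * exp h * real (card {j. j < m \<and> j * L < n}))"
proof (induction m)
  case 0
  then show ?case by (simp add: centered_sum_def prob_space)
next
  case (Suc m)
  define v where "v = 1 + 2 * (\<Sum>k\<in>{1..L}. \<phi> k)"
  have "0 \<le> v" using phi_nonneg by (simp add: v_def sum_nonneg)
  define P where "P m = \<mu>\<^sup>2 * real (min n (m * L)) * v * exp h / 2 + \<phi> L * exp h * real (card {j. j < m \<and> j * L < n})" for m
  show ?case
  proof (cases "m mod 2 = r \<and> m * L < n")
    case False
    then have "alt_blocks n L r (Suc m) = alt_blocks n L r m"
      by (auto simp: alt_blocks_Suc block_def)
    moreover have "P m \<le> P (Suc m)"
      unfolding P_def card_blocks_below_Suc using phi_nonneg[of L] \<open>0 \<le> v\<close>
      by (intro add_mono divide_right_mono mult_right_mono mult_left_mono) auto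
    ultimately show ?thesis using Suc.IH by (simp add: P_def v_def order_trans)
  next
    case True
    define \<Delta> where "\<Delta> = \<mu>\<^sup>2 * real (card (block n L m)) * v * exp h / 2 + \<phi> L * exp h"
    have min_Suc: "real (min n (Suc m * L)) = real (min n (m * L)) + real (card (block n L m))"
      using True by (auto simp: block_def)
    have "P m + \<Delta> = P (Suc m)"
      unfolding P_def \<Delta>_def card_blocks_below_Suc min_Suc using True by (simp add: algebra_simps add_divide_distrib)
    have "expectation (\<lambda>\<omega>. exp (\<mu> * centered_sum X y q (alt_blocks n L r (Suc m)) \<omega>))
        \<le> expectation (\<lambda>\<omega>. exp (\<mu> * centered_sum X y q (alt_blocks n L r m) \<omega>)) * (1 + \<Delta>)"
      using mgf_alt_blocks_Suc_le[OF L mu, of m r n] True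
      by (simp add: \<Delta>_def v_def add.assoc)
    also have "\<dots> \<le> exp (P m) * (1 + \<Delta>)"
      using Suc.IH phi_nonneg[of L] \<open>0 \<le> v\<close>
      by (intro mult_right_mono) (simp_all add: P_def \<Delta>_def v_def)
    also have "\<dots> \<le> exp (P m) * exp \<Delta>" by (intro mult_left_mono exp_ge_add_one_self) auto
    also have "\<dots> = exp (P (Suc m))" using \<open>P m + \<Delta> = P (Suc m)\<close> by (simp add: mult_exp_exp)
    finally show ?thesis by (simp add: P_def v_def)
  qed
qed

lemma prob_alt_blocks_ge:
  assumes L: "L \<ge> 1" and lam: "0 < \<eta>" "\<eta> * real L \<le> h" and \<sigma>: "\<bar>\<sigma>\<bar> = 1"
    and Vc: "1 + 2 * (\<Sum>k\<in>{1..L}. \<phi> k) \<le> Vc" and Cp: "\<phi> L * (real n / real L + 1) \<le> Cp"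
  shows "prob {\<omega>\<in>space M. \<sigma> * centered_sum X y q (alt_blocks n L r n) \<omega> \<ge> t}
    \<le> exp (\<eta>\<^sup>2 * real n * Vc * exp h / 2 + exp h * Cp - \<eta> * t)"
proof -
  let ?W = "centered_sum X y q (alt_blocks n L r n)"
  have [measurable]: "?W \<in> borel_measurable M" by (rule centered_sum_measurable) (auto simp: alt_blocks_def)
  have "\<bar>\<sigma> * \<eta> * ?W \<omega>\<bar> \<le> \<eta> * real n" for \<omega>
    using abs_centered_sum_le_card[OF q_bounds, of X y "alt_blocks n L r n" \<omega>] card_mono[of "{1..n}" "alt_blocks n L r n"]
      \<sigma> lam by (force simp: abs_mult alt_blocks_def intro: mult_left_mono)
  then have "integrable M (\<lambda>\<omega>. exp (\<eta> * (\<sigma> * ?W \<omega>)))"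
    by (intro integrable_const_bound[where B="exp (\<eta> * real n)"] AE_I2) (auto simp: abs_le_iff mult_ac)
  then have "prob {\<omega>\<in>space M. \<sigma> * ?W \<omega> \<ge> t} \<le> expectation (\<lambda>\<omega>. exp ((\<sigma> * \<eta>) * ?W \<omega>)) * exp (- \<eta> * t)"
    using prob_ge_le_exp_moment[of \<eta> "\<lambda>\<omega>. \<sigma> * ?W \<omega>" t] lam by (simp add: mult_ac)
  also have "\<dots> \<le> exp (\<eta>\<^sup>2 * real n * Vc * exp h / 2 + exp h * Cp) * exp (- \<eta> * t)"
  proof (intro mult_right_mono order_trans[OF mgf_alt_blocks_le[OF L, of "\<sigma> * \<eta>" h n r n]])
    show "\<bar>\<sigma> * \<eta>\<bar> * real L \<le> h" using \<sigma> lam by (simp add: abs_mult)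
    have "\<sigma>\<^sup>2 = 1" using \<sigma> by (metis power2_abs power_one)
    then have "(\<sigma> * \<eta>)\<^sup>2 = \<eta>\<^sup>2" by (simp add: power_mult_distrib)
    have "\<phi> L * real (card {j. j < n \<and> j * L < n}) \<le> Cp"
      using order_trans[OF mult_left_mono[OF card_blocks_below[OF L] phi_nonneg] Cp] .
    then have "\<phi> L * exp h * real (card {j. j < n \<and> j * L < n}) \<le> exp h * Cp"
      by (simp add: mult_ac mult_left_mono)
    moreover have "\<eta>\<^sup>2 * real (min n (n * L)) * (1 + 2 * (\<Sum>k\<in>{1..L}. \<phi> k)) * exp h
        \<le> \<eta>\<^sup>2 * real n * Vc * exp h"
      using Vc phi_nonneg by (intro mult_right_mono mult_mono mult_left_mono) (auto simp: sum_nonneg)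
    ultimately show "exp ((\<sigma> * \<eta>)\<^sup>2 * real (min n (n * L)) * (1 + 2 * (\<Sum>k\<in>{1..L}. \<phi> k)) * exp h / 2
           + \<phi> L * exp h * real (card {j. j < n \<and> j * L < n}))
      \<le> exp (\<eta>\<^sup>2 * real n * Vc * exp h / 2 + exp h * Cp)"
      unfolding exp_le_cancel_iff \<open>(\<sigma> * \<eta>)\<^sup>2 = \<eta>\<^sup>2\<close> by linarith
  qed simp
  also have "\<dots> = exp (\<eta>\<^sup>2 * real n * Vc * exp h / 2 + exp h * Cp - \<eta> * t)"
    by (simp add: mult_exp_exp)
  finally show ?thesis .
qed

lemma prob_abs_centered_sum_gt:
  assumes L: "L \<ge> 1" and lam: "0 < \<eta>" "\<eta> * real L \<le> h"
    and Vc: "1 + 2 * (\<Sum>k\<in>{1..L}. \<phi> k) \<le> Vc" and Cp: "\<phi> L * (real n / real L + 1) \<le> Cp"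
  shows "prob {\<omega>\<in>space M. \<bar>centered_sum X y q {1..n} \<omega>\<bar> > t}
    \<le> 4 * exp (\<eta>\<^sup>2 * real n * Vc * exp h / 2 + exp h * Cp - \<eta> * (t / 2))"
proof -
  let ?W = "\<lambda>r. centered_sum X y q (alt_blocks n L r n)"
  define E where "E r \<sigma> = {\<omega>\<in>space M. \<sigma> * ?W r \<omega> \<ge> t / 2}" for r and \<sigma> :: real
  have [measurable]: "?W r \<in> borel_measurable M" for r
    by (rule centered_sum_measurable) (auto simp: alt_blocks_def)
  then have [measurable]: "E r \<sigma> \<in> events" for r \<sigma> unfolding E_def by measurable
  have Eb: "prob (E r \<sigma>) \<le> exp (\<eta>\<^sup>2 * real n * Vc * exp h / 2 + exp h * Cp - \<eta> * (t / 2))"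
    if "\<bar>\<sigma>\<bar> = 1" for r \<sigma>
    unfolding E_def by (rule prob_alt_blocks_ge[OF L lam that Vc Cp])
  have "centered_sum X y q {1..n} \<omega> = ?W 0 \<omega> + ?W 1 \<omega>" for \<omega>
    using alt_blocks_partition[OF L] by (metis centered_sum_union finite_alt_blocks)
  then have "{\<omega>\<in>space M. \<bar>centered_sum X y q {1..n} \<omega>\<bar> > t} \<subseteq> (E 0 1 \<union> E 1 1) \<union> (E 0 (-1) \<union> E 1 (-1))"
    unfolding E_def by auto
  then have "prob {\<omega>\<in>space M. \<bar>centered_sum X y q {1..n} \<omega>\<bar> > t}
      \<le> prob ((E 0 1 \<union> E 1 1) \<union> (E 0 (-1) \<union> E 1 (-1)))"
    by (intro finite_measure_mono) auto
  also have "\<dots> \<le> (prob (E 0 1) + prob (E 1 1)) + (prob (E 0 (-1)) + prob (E 1 (-1)))"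
    by (intro measure_Un_le[THEN order_trans] add_mono) auto
  also have "\<dots> \<le> 4 * exp (\<eta>\<^sup>2 * real n * Vc * exp h / 2 + exp h * Cp - \<eta> * (t / 2))"
    using Eb[of 1 0] Eb[of 1 1] Eb[of "-1" 0] Eb[of "-1" 1] by simp
  finally show ?thesis .
qed

end

end

lemma abs_diff_le_between:
  fixes G F :: "real \<Rightarrow> real"
  assumes "mono G" "mono F" "u \<le> x" "x \<le> v" "\<bar>G u - F u\<bar> \<le> e" "\<bar>G v - F v\<bar> \<le> e"
  shows "\<bar>G x - F x\<bar> \<le> e + (F v - F u)"
proof -
  have "G u \<le> G x" "G x \<le> G v" "F u \<le> F x" "F x \<le> F v"
    using assms(1-4) by (auto dest: monoD)
  then show ?thesis using assms(5,6) unfolding abs_le_iff by linarith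
qed

lemma abs_diff_le_of_grid:
  fixes G F :: "real \<Rightarrow> real"
  assumes "mono G" "mono F" "s > 0" "d \<ge> 0"
    and lip: "\<And>u v. a \<le> u \<Longrightarrow> u \<le> v \<Longrightarrow> v \<le> a + w + s \<Longrightarrow> F v - F u \<le> d * (v - u)"
    and grid: "\<And>j. j \<le> nat \<lceil>w / s\<rceil> \<Longrightarrow> \<bar>G (a + real j * s) - F (a + real j * s)\<bar> \<le> s"
    and x: "a \<le> x" "x \<le> a + w"
  shows "\<bar>G x - F x\<bar> \<le> (1 + d) * s"
proof -
  define K where "K = nat \<lceil>w / s\<rceil>"
  define j where "j = nat \<lfloor>(x - a) / s\<rfloor>"
  have "0 \<le> (x - a) / s" "(x - a) / s \<le> w / s"
    using x \<open>s > 0\<close> by (auto intro: divide_right_mono)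
  then have "real j \<le> (x - a) / s" "(x - a) / s < real j + 1" "j \<le> K" "real K \<le> w / s + 1"
    unfolding j_def K_def by linarith+
  then have j_le: "real j * s \<le> x - a" and j_gt: "x - a < (real j + 1) * s" and "real K * s \<le> w + s"
    using \<open>s > 0\<close> by (simp_all add: field_simps)
  show ?thesis
  proof (cases "j < K")
    case True
    have "F (a + real (Suc j) * s) - F (a + real j * s) \<le> d * s"
      using lip[of "a + real j * s" "a + real (Suc j) * s"] True \<open>s > 0\<close> \<open>real K * s \<le> w + s\<close>
        mult_right_mono[of "real (Suc j)" "real K" s]
      by (simp add: algebra_simps)
    moreover have "\<bar>G x - F x\<bar> \<le> s + (F (a + real (Suc j) * s) - F (a + real j * s))"
      using j_le j_gt True unfolding K_def
      by (intro abs_diff_le_between[OF assms(1,2)] grid) (simp_all add: algebra_simps)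
    ultimately show ?thesis by (simp add: algebra_simps)
  next
    case False
    have "w / s \<le> real K" unfolding K_def by linarith
    then have "w \<le> real K * s" using \<open>s > 0\<close> by (simp add: divide_le_eq)
    then have "x = a + real K * s" using False j_le \<open>j \<le> K\<close> x(2) by simp
    moreover have "s \<le> (1 + d) * s" using \<open>d \<ge> 0\<close> \<open>s > 0\<close> by (simp add: distrib_right)
    ultimately show ?thesis using grid[of K] by (simp add: K_def)
  qed
qed

lemma lipschitz_near_of_deriv_le:
  fixes F f :: "real \<Rightarrow> real"
  assumes "open N" "\<xi> \<in> N" and deriv: "\<And>x. x \<in> N \<Longrightarrow> (F has_real_derivative f x) (at x)"
    and bound: "\<And>x. x \<in> N \<Longrightarrow> f x \<le> d"
  obtains \<delta> where "\<delta> > 0" "\<And>u v. \<xi> - \<delta> \<le> u \<Longrightarrow> u \<le> v \<Longrightarrow> v \<le> \<xi> + \<delta> \<Longrightarrow> F v - F u \<le> d * (v - u)"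
proof -
  obtain e where "e > 0" and ball: "ball \<xi> e \<subseteq> N" using assms(1,2) openE by blast
  have inN: "z \<in> N" if "\<xi> - e / 2 \<le> z" "z \<le> \<xi> + e / 2" for z
    using that \<open>e > 0\<close> ball by (auto simp: dist_real_def subset_iff)
  show thesis
  proof (rule that[of "e / 2"])
    fix u v assume uv: "\<xi> - e / 2 \<le> u" "u \<le> v" "v \<le> \<xi> + e / 2"
    show "F v - F u \<le> d * (v - u)"
    proof (cases "u = v")
      case False
      then obtain z where z: "u < z" "z < v" "F v - F u = (v - u) * f z"
        using MVT2[of u v F f] uv deriv inN by fastforce
      then show ?thesis using bound[OF inN] uv mult_left_mono[of "f z" d "v - u"] by (simp add: mult.commute)
    qed simp
  qed (use \<open>e > 0\<close> in simp)
qed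

text \<open>The deviation bound \<open>s\<^sub>n\<close> and the half-width \<open>\<tau>\<^sub>n\<close> of the window around \<open>\<xi>\<^sub>p\<close> in the theorem,
  with \<open>c = 16 C\<^sub>3 + \<theta>\<close>.\<close>

definition dev_bound :: "real \<Rightarrow> nat \<Rightarrow> real" where
  "dev_bound c n = sqrt (c * ln (real n) / (4 * real n))"

definition window_radius :: "real \<Rightarrow> nat \<Rightarrow> real" where
  "window_radius c n = sqrt c * ln (real n) powr (3/2) / (sqrt (real n) * sqrt (ln (ln (real n))))"

lemma dev_bound_eq: "dev_bound c n = sqrt c * sqrt (ln (real n) / (4 * real n))"
  unfolding dev_bound_def by (rule sqrt_mult_divide)

lemma eventually_dev_bound_small:
  "eventually (\<lambda>n. dev_bound c n * (real n powr (1/3) + 1) < 3/4) sequentially"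
proof -
  have "((\<lambda>n. sqrt c * (sqrt (ln (real n) / (4 * real n)) * (real n powr (1/3) + 1))) \<longlongrightarrow> sqrt c * 0)
      sequentially"
    by (intro tendsto_mult tendsto_const) real_asymp
  then show ?thesis by (auto dest: order_tendstoD(2)[where a="3/4"] simp: dev_bound_eq mult.assoc)
qed

lemma eventually_grid_size_le:
  assumes "c > 0"
  shows "eventually (\<lambda>n. real (Suc (nat \<lceil>2 * window_radius c n / dev_bound c n\<rceil>)) \<le> real n powr (1/6))
    sequentially"
proof -
  have "eventually (\<lambda>n::nat. 2 * (ln (real n) powr (3/2) / (sqrt (real n) * sqrt (ln (ln (real n)))))
      / sqrt (ln (real n) / (4 * real n)) + 2 \<le> real n powr (1/6)) sequentially"
    "eventually (\<lambda>n::nat. 0 \<le> ln (ln (real n))) sequentially"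
    "eventually (\<lambda>n::nat. 0 \<le> ln (real n)) sequentially"
    by real_asymp+
  then show ?thesis
  proof eventually_elim
    case (elim n)
    define g where "g = 2 * (ln (real n) powr (3/2) / (sqrt (real n) * sqrt (ln (ln (real n)))))
      / sqrt (ln (real n) / (4 * real n))"
    have "2 * window_radius c n / dev_bound c n = g"
      using assms by (simp add: g_def window_radius_def dev_bound_eq)
    moreover have "0 \<le> g"
      unfolding g_def using elim by (intro divide_nonneg_nonneg mult_nonneg_nonneg) auto
    then have "real (Suc (nat \<lceil>g\<rceil>)) \<le> g + 2" by linarith
    ultimately show ?case using elim by (simp add: g_def)
  qed
qed

lemma tendsto_window_radius_add_dev_bound: "((\<lambda>n. window_radius c n + dev_bound c n) \<longlongrightarrow> 0) sequentially"
proof -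
  have "((\<lambda>n::nat. sqrt c * (ln (real n) powr (3/2) / (sqrt (real n) * sqrt (ln (ln (real n))))
      + sqrt (ln (real n) / (4 * real n)))) \<longlongrightarrow> sqrt c * 0) sequentially"
    by (intro tendsto_mult tendsto_const) real_asymp
  then show ?thesis by (simp add: window_radius_def dev_bound_eq distrib_left)
qed

lemma chernoff_exponent_le:
  fixes S c s \<eta> x :: real
  assumes Vc: "Vc = 1 + 2 * S" and "0 \<le> S" and c: "64 * Vc \<le> c" and "x > 0" "ln x > 0"
    and s_sq: "s\<^sup>2 * x = c * ln x / 4" and \<eta>: "\<eta> = s / (3 * Vc)"
  shows "\<eta>\<^sup>2 * x * Vc * exp (1/4) / 2 + exp (1/4) * (2 * S\<^sup>2) - \<eta> * (x * s / 2) \<le> 3 * S\<^sup>2 - 4/3 * ln x"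
proof -
  have "Vc \<ge> 1" using Vc \<open>0 \<le> S\<close> by simp
  have "exp (1/4::real) \<le> 3/2" using real_exp_bound_lemma[of "1/4"] by simp
  then have "\<eta>\<^sup>2 * x * Vc * exp (1/4) / 2 \<le> \<eta>\<^sup>2 * x * Vc * (3/2) / 2"
    and "exp (1/4) * (2 * S\<^sup>2) \<le> 3/2 * (2 * S\<^sup>2)"
    using \<open>Vc \<ge> 1\<close> \<open>x > 0\<close> by (intro divide_right_mono mult_left_mono mult_right_mono; simp)+
  moreover have "\<eta>\<^sup>2 * x * Vc * (3/2) / 2 = s\<^sup>2 * x / (12 * Vc)" "\<eta> * (x * s / 2) = s\<^sup>2 * x / (6 * Vc)"
    using \<open>Vc \<ge> 1\<close> by (simp_all add: \<eta> field_simps power2_eq_square)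
  moreover have "64 * Vc * ln x \<le> c * ln x"
    using c \<open>ln x > 0\<close> by (intro mult_right_mono) auto
  then have "4/3 * ln x \<le> s\<^sup>2 * x / (12 * Vc)"
    unfolding s_sq using \<open>Vc \<ge> 1\<close> by (simp add: field_simps)
  ultimately show ?thesis by linarith
qed

locale phi_mixing_summable = phi_mixing +
  assumes summable_sqrt_phi: "summable (\<lambda>n. sqrt (phi_mix M X (Suc n)))"
begin

definition sqrt_phi_sum :: real where
  "sqrt_phi_sum = (\<Sum>n. sqrt (\<phi> (Suc n)))"

lemma sum_sqrt_phi_le: "(\<Sum>j<L. sqrt (\<phi> (Suc j))) \<le> sqrt_phi_sum"
  unfolding sqrt_phi_sum_def by (rule sum_le_suminf[OF summable_sqrt_phi]) (auto simp: phi_nonneg)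

lemma sqrt_phi_sum_nonneg: "0 \<le> sqrt_phi_sum"
  using sum_sqrt_phi_le[of 0] by simp

lemma sum_phi_le: "(\<Sum>k\<in>{1..L}. \<phi> k) \<le> sqrt_phi_sum"
proof -
  have "(\<Sum>k\<in>{1..L}. \<phi> k) = (\<Sum>j<L. \<phi> (Suc j))" by (simp add: sum.atLeast1_atMost_eq)
  also have "\<dots> \<le> (\<Sum>j<L. sqrt (\<phi> (Suc j)))"
    by (intro sum_mono real_le_rsqrt) (simp add: power2_eq_square mult_left_le phi_nonneg phi_le_1)
  also have "\<dots> \<le> sqrt_phi_sum" by (rule sum_sqrt_phi_le)
  finally show ?thesis .
qed

text \<open>Since \<open>\<phi>\<close> decreases, \<open>L sqrt (\<phi> L) \<le> (\<Sum>j<L. sqrt (\<phi> (j + 1)))\<close>.\<close>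

lemma phi_le_sqrt_phi_sum_sq:
  assumes "L \<ge> 1"
  shows "\<phi> L \<le> sqrt_phi_sum\<^sup>2 / (real L)\<^sup>2"
proof -
  have "(\<Sum>j<L. sqrt (\<phi> L)) \<le> (\<Sum>j<L. sqrt (\<phi> (Suc j)))"
    using assms by (intro sum_mono real_sqrt_le_mono phi_antimono) auto
  then have "real L * sqrt (\<phi> L) \<le> sqrt_phi_sum" using sum_sqrt_phi_le[of L] by simp
  then have "(real L * sqrt (\<phi> L))\<^sup>2 \<le> sqrt_phi_sum\<^sup>2" by (intro power_mono) (auto simp: phi_nonneg)
  then show ?thesis using assms phi_nonneg[of L] by (simp add: power_mult_distrib pos_le_divide_eq mult.commute)
qed

lemma phi_blocks_le:
  assumes "L \<ge> 1" "real n \<le> real L ^ 3"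
  shows "\<phi> L * (real n / real L + 1) \<le> 2 * sqrt_phi_sum\<^sup>2"
proof -
  have "\<phi> L * (real n / real L + 1) \<le> sqrt_phi_sum\<^sup>2 / (real L)\<^sup>2 * (real n / real L + 1)"
    using assms by (intro mult_right_mono phi_le_sqrt_phi_sum_sq) auto
  also have "\<dots> = sqrt_phi_sum\<^sup>2 * (real n / real L ^ 3) + sqrt_phi_sum\<^sup>2 / (real L)\<^sup>2"
    using assms by (simp add: field_simps power2_eq_square power3_eq_cube)
  also have "\<dots> \<le> sqrt_phi_sum\<^sup>2 * 1 + sqrt_phi_sum\<^sup>2 / 1"
    using assms by (intro add_mono mult_left_mono divide_left_mono) (auto simp: one_le_power)
  finally show ?thesis by simp
qed

text \<open>Blocks of length \<open>L = \<lceil>n powr (1/3)\<rceil>\<close> keep the mixing cost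
  \<open>\<phi>(L) (n/L + 1)\<close> bounded, and the parameter \<open>\<eta> = s\<^sub>n / (3 (1 + 2 S))\<close> satisfies \<open>\<eta> L \<le> 1/4\<close> and
  produces the exponent \<open>-(4/3) ln n\<close>.\<close>

lemma prob_abs_centered_sum_gt_dev_bound:
  assumes marginal: "\<And>i. i \<ge> 1 \<Longrightarrow> prob {\<omega>\<in>space M. X i \<omega> \<le> y} = q"
    and c: "c \<ge> 64 * (1 + 2 * sqrt_phi_sum)" and n: "n \<ge> 2"
    and small: "dev_bound c n * (real n powr (1/3) + 1) \<le> 3/4"
  shows "prob {\<omega>\<in>space M. \<bar>centered_sum X y q {1..n} \<omega>\<bar> > real n * dev_bound c n}
    \<le> 4 * exp (3 * sqrt_phi_sum\<^sup>2) * real n powr (-4/3)"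
proof -
  define S where "S = sqrt_phi_sum"
  define s where "s = dev_bound c n"
  define Vc where "Vc = 1 + 2 * S"
  define L where "L = nat \<lceil>real n powr (1/3)\<rceil>"
  define \<eta> where "\<eta> = s / (3 * Vc)"
  have "0 \<le> S" "Vc \<ge> 1" using sqrt_phi_sum_nonneg by (simp_all add: S_def Vc_def)
  have "ln (real n) > 0" using n by simp
  then have "s > 0" and s_sq: "s\<^sup>2 * real n = c * ln (real n) / 4"
    using c n \<open>0 \<le> S\<close> by (auto simp: s_def dev_bound_def S_def)
  have "L \<ge> 1" "real n \<le> real L ^ 3" "real L \<le> real n powr (1/3) + 1"
    using cube_root_ceiling[of n] n by (simp_all add: L_def)
  have "\<eta> * real L \<le> s / 3 * (real n powr (1/3) + 1)"
    unfolding \<eta>_def using \<open>s > 0\<close> \<open>Vc \<ge> 1\<close> \<open>real L \<le> real n powr (1/3) + 1\<close>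
    by (intro mult_mono) (auto simp: divide_simps)
  then have "\<eta> * real L \<le> 1/4" using small by (simp add: s_def)
  have "\<eta> > 0" using \<open>s > 0\<close> \<open>Vc \<ge> 1\<close> by (simp add: \<eta>_def)
  have "prob {\<omega>\<in>space M. \<bar>centered_sum X y q {1..n} \<omega>\<bar> > real n * s}
      \<le> 4 * exp (\<eta>\<^sup>2 * real n * Vc * exp (1/4) / 2 + exp (1/4) * (2 * S\<^sup>2) - \<eta> * (real n * s / 2))"
    using sum_phi_le[of L] phi_blocks_le[OF \<open>L \<ge> 1\<close> \<open>real n \<le> real L ^ 3\<close>]
    by (intro prob_abs_centered_sum_gt[OF marginal \<open>L \<ge> 1\<close> \<open>\<eta> > 0\<close> \<open>\<eta> * real L \<le> 1/4\<close>])
      (simp_all add: Vc_def S_def)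
  also have "\<eta>\<^sup>2 * real n * Vc * exp (1/4) / 2 + exp (1/4) * (2 * S\<^sup>2) - \<eta> * (real n * s / 2)
      \<le> 3 * S\<^sup>2 - 4/3 * ln (real n)"
    using c n \<open>0 \<le> S\<close> \<open>ln (real n) > 0\<close> s_sq
    by (intro chernoff_exponent_le[OF Vc_def _ _ _ _ _ \<eta>_def]) (auto simp: S_def Vc_def)
  also have "4 * exp (3 * S\<^sup>2 - 4/3 * ln (real n)) = 4 * exp (3 * S\<^sup>2) * real n powr (-4/3)"
    using n by (simp add: powr_def mult.assoc mult_exp_exp)
  finally show ?thesis unfolding S_def s_def by simp
qed

lemma prob_grid_deviation_le:
  fixes F :: "real \<Rightarrow> real" and x :: "nat \<Rightarrow> real"
  assumes marginal: "\<And>i z. i \<ge> 1 \<Longrightarrow> prob {\<omega>\<in>space M. X i \<omega> \<le> z} = F z"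
    and c: "c \<ge> 64 * (1 + 2 * sqrt_phi_sum)" and n: "n \<ge> 2"
    and small: "dev_bound c n * (real n powr (1/3) + 1) \<le> 3/4"
    and K: "real (Suc K) \<le> real n powr (1/6)"
  shows "prob (\<Union>j\<le>K. {\<omega>\<in>space M. \<bar>centered_sum X (x j) (F (x j)) {1..n} \<omega>\<bar> > real n * dev_bound c n})
    \<le> 4 * exp (3 * sqrt_phi_sum\<^sup>2) * real n powr (-7/6)"
proof -
  define C where "C = 4 * exp (3 * sqrt_phi_sum\<^sup>2)"
  have [measurable]: "centered_sum X (x j) (F (x j)) {1..n} \<in> borel_measurable M" for j
    by (rule centered_sum_measurable[OF marginal]) auto
  have "prob (\<Union>j\<le>K. {\<omega>\<in>space M. \<bar>centered_sum X (x j) (F (x j)) {1..n} \<omega>\<bar> > real n * dev_bound c n})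
      \<le> (\<Sum>j\<le>K. prob {\<omega>\<in>space M. \<bar>centered_sum X (x j) (F (x j)) {1..n} \<omega>\<bar> > real n * dev_bound c n})"
    by (rule measure_UNION_le) (simp, measurable)
  also have "\<dots> \<le> (\<Sum>j\<le>K. C * real n powr (-4/3))"
    unfolding C_def using c n small
    by (intro sum_mono prob_abs_centered_sum_gt_dev_bound[OF marginal]) auto
  also have "\<dots> = real (Suc K) * (C * real n powr (-4/3))" by simp
  also have "\<dots> \<le> real n powr (1/6) * (C * real n powr (-4/3))"
    using K by (intro mult_right_mono) (auto simp: C_def)
  also have "\<dots> = C * real n powr (-7/6)"
    using n by (simp add: powr_add[symmetric])
  finally show ?thesis by (simp add: C_def)
qed

lemma AE_eventually_emp_df_close_on_grid:
  fixes F :: "real \<Rightarrow> real" and x :: "nat \<Rightarrow> nat \<Rightarrow> real" and K :: "nat \<Rightarrow> nat"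
  assumes marginal: "\<And>i z. i \<ge> 1 \<Longrightarrow> prob {\<omega>\<in>space M. X i \<omega> \<le> z} = F z"
    and c: "c \<ge> 64 * (1 + 2 * sqrt_phi_sum)"
    and K: "eventually (\<lambda>n. real (Suc (K n)) \<le> real n powr (1/6)) sequentially"
  shows "AE \<omega> in M. eventually (\<lambda>n. \<forall>j\<le>K n.
    \<bar>emp_df X n \<omega> (x n j) - F (x n j)\<bar> \<le> dev_bound c n) sequentially"
proof -
  define B where "B n = (\<Union>j\<le>K n. {\<omega>\<in>space M.
    \<bar>centered_sum X (x n j) (F (x n j)) {1..n} \<omega>\<bar> > real n * dev_bound c n})" for n
  have "eventually (\<lambda>n. n \<ge> 2 \<and> dev_bound c n * (real n powr (1/3) + 1) \<le> 3/4
      \<and> real (Suc (K n)) \<le> real n powr (1/6)) sequentially"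
    using eventually_dev_bound_small[of c] K eventually_ge_at_top[of 2] by eventually_elim auto
  then obtain n0 where n0: "\<And>n. n \<ge> n0 \<Longrightarrow> n \<ge> 2 \<and> dev_bound c n * (real n powr (1/3) + 1) \<le> 3/4
      \<and> real (Suc (K n)) \<le> real n powr (1/6)"
    unfolding eventually_sequentially by blast
  define A where "A n = (if n \<ge> n0 then B n else {})" for n
  have [measurable]: "centered_sum X z (F z) {1..n} \<in> borel_measurable M" for z n
    by (rule centered_sum_measurable[OF marginal]) auto
  then have "B n \<in> events" for n unfolding B_def by (intro sets.finite_UN finite_atMost) measurable
  then have [measurable]: "A n \<in> events" for n by (simp add: A_def)
  have "prob (B n) \<le> 4 * exp (3 * sqrt_phi_sum\<^sup>2) * real n powr (-7/6)" if "n \<ge> n0" for n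
    unfolding B_def using n0[OF that] by (intro prob_grid_deviation_le[OF marginal c]) auto
  then have prob_A: "prob (A n) \<le> 4 * exp (3 * sqrt_phi_sum\<^sup>2) * real n powr (-7/6)" for n
    by (simp add: A_def)
  have "summable (\<lambda>n. 4 * exp (3 * sqrt_phi_sum\<^sup>2) * real n powr (-7/6))"
    by (intro summable_mult) (simp add: summable_real_powr_iff)
  then have "summable (\<lambda>n. prob (A n))"
    by (rule summable_comparison_test'[where N=0]) (use prob_A in simp)
  then have "AE \<omega> in M. eventually (\<lambda>n. \<omega> \<in> space M - A n) sequentially"
    by (intro borel_cantelli_AE1) (auto simp: less_top[symmetric])
  then show ?thesis
  proof (rule eventually_mono)
    fix \<omega> assume "eventually (\<lambda>n. \<omega> \<in> space M - A n) sequentially"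
    with eventually_ge_at_top[of n0] show "eventually (\<lambda>n. \<forall>j\<le>K n.
        \<bar>emp_df X n \<omega> (x n j) - F (x n j)\<bar> \<le> dev_bound c n) sequentially"
    proof eventually_elim
      case (elim n)
      then have "n \<ge> 1" using n0 by fastforce
      then show ?case using elim by (auto simp: A_def B_def not_less abs_emp_df_diff_le_iff)
    qed
  qed
qed

text \<open>Between two grid points \<open>F\<^sub>n\<close> and \<open>F\<close> are sandwiched by monotonicity, and \<open>F\<close> moves by at most
  \<open>d s\<^sub>n\<close> there.\<close>

lemma AE_eventually_emp_df_close_near:
  fixes F :: "real \<Rightarrow> real"
  assumes marginal: "\<And>i z. i \<ge> 1 \<Longrightarrow> prob {\<omega>\<in>space M. X i \<omega> \<le> z} = F z"
    and c: "c \<ge> 64 * (1 + 2 * sqrt_phi_sum)" and "0 \<le> d" and "\<delta> > 0"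
    and lip: "\<And>u v. \<xi> - \<delta> \<le> u \<Longrightarrow> u \<le> v \<Longrightarrow> v \<le> \<xi> + \<delta> \<Longrightarrow> F v - F u \<le> d * (v - u)"
  shows "AE \<omega> in M. eventually (\<lambda>n. \<forall>x \<in> {\<xi> - window_radius c n .. \<xi> + window_radius c n}.
    \<bar>emp_df X n \<omega> x - F x\<bar> \<le> (1 + d) * dev_bound c n) sequentially"
proof -
  let ?s = "dev_bound c" and ?\<tau> = "window_radius c"
  have "mono F" using mono_distribution_function[of "X 1" F] random_variable_X[of 1] marginal[of 1] by simp
  have "c > 0" using c sqrt_phi_sum_nonneg by (smt (verit))
  then have grid: "AE \<omega> in M. eventually (\<lambda>n. \<forall>j\<le>nat \<lceil>2 * ?\<tau> n / ?s n\<rceil>.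
      \<bar>emp_df X n \<omega> (\<xi> - ?\<tau> n + real j * ?s n) - F (\<xi> - ?\<tau> n + real j * ?s n)\<bar> \<le> ?s n) sequentially"
    by (intro AE_eventually_emp_df_close_on_grid[OF marginal c] eventually_grid_size_le)
  have radius: "eventually (\<lambda>n. ?\<tau> n + ?s n < \<delta> \<and> n \<ge> 2) sequentially"
    using order_tendstoD(2)[OF tendsto_window_radius_add_dev_bound \<open>\<delta> > 0\<close>] eventually_ge_at_top[of 2]
    by eventually_elim simp
  show ?thesis
    using grid
  proof (rule eventually_mono)
    fix \<omega> assume "eventually (\<lambda>n. \<forall>j\<le>nat \<lceil>2 * ?\<tau> n / ?s n\<rceil>.
      \<bar>emp_df X n \<omega> (\<xi> - ?\<tau> n + real j * ?s n) - F (\<xi> - ?\<tau> n + real j * ?s n)\<bar> \<le> ?s n) sequentially"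
    with radius show "eventually (\<lambda>n. \<forall>x \<in> {\<xi> - ?\<tau> n .. \<xi> + ?\<tau> n}.
      \<bar>emp_df X n \<omega> x - F x\<bar> \<le> (1 + d) * ?s n) sequentially"
    proof eventually_elim
      case (elim n)
      then have "?s n > 0" using \<open>c > 0\<close> by (simp add: dev_bound_def)
      have lip_n: "F v - F u \<le> d * (v - u)"
        if "\<xi> - ?\<tau> n \<le> u" "u \<le> v" "v \<le> \<xi> - ?\<tau> n + 2 * ?\<tau> n + ?s n" for u v
        using that elim \<open>?s n > 0\<close> by (intro lip) auto
      show ?case
        using abs_diff_le_of_grid[where a="\<xi> - ?\<tau> n" and w="2 * ?\<tau> n",
            OF mono_emp_df[of X n \<omega>] \<open>mono F\<close> \<open>?s n > 0\<close> \<open>0 \<le> d\<close> lip_n] elim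
        by auto
    qed
  qed
qed

end

theorem theorem2p4:
  fixes M :: "'a measure" and X :: "nat \<Rightarrow> 'a \<Rightarrow> real"
    and F f :: "real \<Rightarrow> real" and N :: "real set" and p \<theta> :: real
  assumes "prob_space M"
    and rv: "\<And>i. i \<ge> 1 \<Longrightarrow> X i \<in> borel_measurable M"
    and marg: "\<And>i x. i \<ge> 1 \<Longrightarrow> measure M {\<omega> \<in> space M. X i \<omega> \<le> x} = F x"
    and mix_mono: "\<And>n. n \<ge> 1 \<Longrightarrow> phi_mix M X (Suc n) \<le> phi_mix M X n"
    and mix_lim: "phi_mix M X \<longlonglongrightarrow> 0"
    and mix_sum: "summable (\<lambda>n. sqrt (phi_mix M X (Suc n)))"
    and p: "0 < p" "p < 1"
    and N: "open N" "Inf {x. F x \<ge> p} \<in> N"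
    and dens: "\<And>x. x \<in> N \<Longrightarrow> (F has_real_derivative f x) (at x)"
    and fcont: "continuous_on N f"
    and fpos: "\<And>x. x \<in> N \<Longrightarrow> f x > 0"
    and fbdd: "bdd_above (f ` N)"
    and \<theta>: "\<theta> > 0"
  shows "let \<xi> = Inf {x. F x \<ge> p};
             d = Sup (f ` N);
             C3 = 4 * (1 + 4 * (\<Sum>n. sqrt (phi_mix M X (Suc n))));
             \<tau> = (\<lambda>n::nat. sqrt (16 * C3 + \<theta>) * ln (real n) powr (3/2)
                    / (sqrt (real n) * sqrt (ln (ln (real n)))))
         in AE \<omega> in M. eventually (\<lambda>n. \<forall>x \<in> {\<xi> - \<tau> n .. \<xi> + \<tau> n}.
                \<bar>emp_df X n \<omega> x - F x\<bar> \<le> (1 + d) * sqrt ((16 * C3 + \<theta>) * ln (real n) / (4 * real n)))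
              sequentially"
proof -
  interpret phi_mixing_summable M X
    using assms(1) rv mix_mono mix_sum
    by (simp add: phi_mixing_summable_def phi_mixing_summable_axioms_def phi_mixing_def phi_mixing_axioms_def)
  define c where "c = 16 * (4 * (1 + 4 * sqrt_phi_sum)) + \<theta>"
  have f_le: "f x \<le> Sup (f ` N)" if "x \<in> N" for x using that fbdd by (rule cSUP_upper)
  then obtain \<delta> where "\<delta> > 0" and lip: "\<And>u v. Inf {x. F x \<ge> p} - \<delta> \<le> u \<Longrightarrow> u \<le> v
      \<Longrightarrow> v \<le> Inf {x. F x \<ge> p} + \<delta> \<Longrightarrow> F v - F u \<le> Sup (f ` N) * (v - u)"
    using lipschitz_near_of_deriv_le[OF N dens] by blast
  have "0 \<le> Sup (f ` N)" using f_le[OF N(2)] fpos[OF N(2)] by simp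
  moreover have "c \<ge> 64 * (1 + 2 * sqrt_phi_sum)" using sqrt_phi_sum_nonneg \<theta> by (simp add: c_def)
  ultimately show ?thesis
    using AE_eventually_emp_df_close_near[OF marg _ _ \<open>\<delta> > 0\<close> lip]
    by (simp only: Let_def c_def dev_bound_def window_radius_def sqrt_phi_sum_def)
qed

end
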